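(* The generating function $$F_{(231,312)}(x,p,q,u,v,s,t)=\sum_{n\ge0}\ \sum_{\pi\in S_n(231,312)} x^n p^{\operatorname{asc}(\pi)}q^{\operatorname{des}(\pi)}u^{\operatorname{lrmax}(\pi)}v^{\operatorname{rlmax}(\pi)}s^{\operatorname{lrmin}(\pi)}t^{\operatorname{rlmin}(\pi)}$$ is equal to $\dfrac{A}{(1-qsx)(1-qx-ptux)(1-qvx)(1-qsvx)}$, where $$\begin{aligned}A={}&1 - p t u x + s t u v x + q^4 s^2 v^2 x^4 + q^3 s v x^3 \bigl(-1 - v + s (-1 + v (-1 + (-1 + p) t u x))\bigr)\\ &- q x \bigl(1 + v - p t u v x + s^2 t u v x (1 + p t u (-1 + v) x) + s (1 + v - p t u x - (-1 + p) t u v x + p t^2 u^2 v x^2 + t u v^2 x (1 - p t u x))\bigr)\\ &+ q^2 x^2 \bigl(v + s^2 v (1 + t u (1 - p + v) x) + s (1 + v^2 (1 - (-1 + p) t u x) + v (2 - p t u x))\bigr).\end{aligned}$$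
   Context: For $n\ge 0$, $S_n$ denotes the set of permutations $\pi=\pi_1\cdots\pi_n$ of $[n]=\{1,\dots,n\}$ ($S_0$ consists of the empty permutation, for which all statistics are $0$). $\pi$ avoids a pattern $\tau\in S_k$ if no subsequence $\pi_{i_1}\cdots\pi_{i_k}$ ($i_1<\dots<i_k$) satisfies $\pi_{i_a}<\pi_{i_b}\iff\tau_a<\tau_b$; $S_n(\tau,\rho)$ is the set of permutations in $S_n$ avoiding both $\tau$ and $\rho$. $\operatorname{asc}(\pi)$ (resp. $\operatorname{des}(\pi)$) is the number of $i\in[n-1]$ with $\pi_i<\pi_{i+1}$ (resp. $\pi_i>\pi_{i+1}$). $\pi_i$ is a left-to-right maximum (resp. minimum) if it is larger (resp. smaller) than every $\pi_j$ with $j<i$, and a right-to-left maximum (resp. minimum) if it is larger (resp. smaller) than every $\pi_j$ with $j>i$; $\operatorname{lrmax},\operatorname{lrmin},\operatorname{rlmax},\operatorname{rlmin}$ count these. *)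

theory Defs
  imports "HOL-Computational_Algebra.Formal_Power_Series"
begin

text \<open>Permutations of [n] are represented as lists pi_1 ... pi_n (0-indexed positions).\<close>
definition perms :: "nat \<Rightarrow> nat list set" where
  "perms n = {xs. length xs = n \<and> distinct xs \<and> set xs = {1..n}}"

definition contains :: "nat list \<Rightarrow> nat list \<Rightarrow> bool" where
  "contains xs tau \<longleftrightarrow> (\<exists>idx :: nat list. length idx = length tau \<and> sorted_wrt (<) idx
     \<and> (\<forall>i<length idx. idx ! i < length xs)
     \<and> (\<forall>a<length tau. \<forall>b<length tau. xs ! (idx ! a) < xs ! (idx ! b) \<longleftrightarrow> tau ! a < tau ! b))"

definition avoids :: "nat list \<Rightarrow> nat list \<Rightarrow> bool" where
  "avoids xs tau \<longleftrightarrow> \<not> contains xs tau"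

definition avoiders :: "nat list \<Rightarrow> nat list \<Rightarrow> nat \<Rightarrow> nat list set" where
  "avoiders tau rho n = {xs \<in> perms n. avoids xs tau \<and> avoids xs rho}"

definition asc :: "nat list \<Rightarrow> nat" where
  "asc xs = card {i. Suc i < length xs \<and> xs ! i < xs ! Suc i}"

definition des :: "nat list \<Rightarrow> nat" where
  "des xs = card {i. Suc i < length xs \<and> xs ! i > xs ! Suc i}"

definition lrmax :: "nat list \<Rightarrow> nat" where
  "lrmax xs = card {i. i < length xs \<and> (\<forall>j<i. xs ! j < xs ! i)}"

definition lrmin :: "nat list \<Rightarrow> nat" where
  "lrmin xs = card {i. i < length xs \<and> (\<forall>j<i. xs ! j > xs ! i)}"

definition rlmax :: "nat list \<Rightarrow> nat" where
  "rlmax xs = card {i. i < length xs \<and> (\<forall>j. i < j \<and> j < length xs \<longrightarrow> xs ! j < xs ! i)}"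

definition rlmin :: "nat list \<Rightarrow> nat" where
  "rlmin xs = card {i. i < length xs \<and> (\<forall>j. i < j \<and> j < length xs \<longrightarrow> xs ! j > xs ! i)}"

definition genfun :: "nat list \<Rightarrow> nat list \<Rightarrow> 'a::field \<Rightarrow> 'a \<Rightarrow> 'a \<Rightarrow> 'a \<Rightarrow> 'a \<Rightarrow> 'a \<Rightarrow> 'a fps" where
  "genfun tau rho p q u v s t = Abs_fps (\<lambda>n. \<Sum>pi\<in>avoiders tau rho n.
      p ^ asc pi * q ^ des pi * u ^ lrmax pi * v ^ rlmax pi * s ^ lrmin pi * t ^ rlmin pi)"

end

theory Submission
  imports Defs
begin

text \<open>A permutation avoids 231 and 312 iff it is layered: a concatenation of layers, i.e.
  decreasing runs of consecutive values, each lying above all earlier ones. Cutting off the last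
  layer (it starts at the entry n) is a bijection between S_n(231,312) and the pairs (a, sigma)
  with 1 <= a <= n and sigma in S_{n-a}(231,312). A layer of length a has weight
  q^(a-1) u v^a s^a t on its own; appended to a nonempty sigma it contributes p q^(a-1) u t v^a
  and hides the right-to-left maxima of sigma. With L(w) = w x / (1 - q w x) this gives
  F(v) = 1 + u t L(s v) + p u t L(v) (F(1) - 1), which is solved first at v = 1 and then for
  general v.\<close>

section \<open>Occurrences of patterns\<close>

definition occurrence :: "nat list \<Rightarrow> nat list \<Rightarrow> nat list \<Rightarrow> bool" where
  "occurrence xs tau idx \<longleftrightarrow> length idx = length tau \<and> sorted_wrt (<) idx
     \<and> (\<forall>i<length idx. idx ! i < length xs)
     \<and> (\<forall>a<length tau. \<forall>b<length tau. xs ! (idx ! a) < xs ! (idx ! b) \<longleftrightarrow> tau ! a < tau ! b)"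

lemma contains_iff_occurrence: "contains xs tau \<longleftrightarrow> (\<exists>idx. occurrence xs tau idx)"
  by (simp add: contains_def occurrence_def)

lemma contains_231I:
  assumes "i < j" "j < k" "k < length xs" "xs ! k < xs ! i" "xs ! i < xs ! j"
  shows "contains xs [2,3,1]"
  unfolding contains_iff_occurrence occurrence_def
  by (rule exI[of _ "[i,j,k]"])
    (use assms in \<open>auto simp: less_Suc_eq numeral_3_eq_3 numeral_2_eq_2\<close>)

lemma contains_312I:
  assumes "i < j" "j < k" "k < length xs" "xs ! j < xs ! k" "xs ! k < xs ! i"
  shows "contains xs [3,1,2]"
  unfolding contains_iff_occurrence occurrence_def
  by (rule exI[of _ "[i,j,k]"])
    (use assms in \<open>auto simp: less_Suc_eq numeral_3_eq_3 numeral_2_eq_2\<close>)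

lemma not_contains_Nil: "tau \<noteq> [] \<Longrightarrow> \<not> contains [] tau"
  unfolding contains_iff_occurrence occurrence_def
  by (metis length_greater_0_conv less_nat_zero_code list.size(3))

lemma contains_take: "contains (take k xs) tau \<Longrightarrow> contains xs tau"
  unfolding contains_iff_occurrence occurrence_def
  by (metis (no_types, lifting) length_take min_less_iff_conj nth_take)

lemma pattern_decreasing_if_contains:
  assumes "contains xs tau" "sorted_wrt (>) xs"
  shows "sorted_wrt (>) tau"
proof -
  obtain idx where idx: "occurrence xs tau idx"
    using assms(1) contains_iff_occurrence by blast
  show ?thesis unfolding sorted_wrt_iff_nth_less
  proof (intro allI impI)
    fix a b assume "a < b" "b < length tau"
    then have "xs ! (idx ! b) < xs ! (idx ! a)"
      using idx assms(2) unfolding occurrence_def sorted_wrt_iff_nth_less by simp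
    then show "tau ! b < tau ! a"
      using idx \<open>a < b\<close> \<open>b < length tau\<close> unfolding occurrence_def by auto
  qed
qed

lemma separated_nth_less:
  "\<forall>x\<in>set xs. \<forall>y\<in>set ys. x < y \<Longrightarrow> i < length xs \<Longrightarrow> j < length ys \<Longrightarrow> xs ! i < ys ! j"
  by simp

lemma occurrence_append_left:
  assumes "occurrence (xs @ ys) tau idx" "\<forall>i<length idx. idx ! i < length xs"
  shows "occurrence xs tau idx"
  using assms by (auto simp: occurrence_def nth_append)

lemma occurrence_append_right:
  assumes occ: "occurrence (xs @ ys) tau idx" and ge: "\<forall>i<length idx. length xs \<le> idx ! i"
  shows "occurrence ys tau (map (\<lambda>i. i - length xs) idx)"
proof -
  have in_ys: "(xs @ ys) ! (idx ! a) = ys ! (idx ! a - length xs)" if "a < length idx" for a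
    using ge[rule_format, of a] that by (simp add: nth_append)
  show ?thesis
    using occ ge in_ys unfolding occurrence_def sorted_wrt_iff_nth_less
    by (auto simp: diff_less_mono less_diff_conv2 add.commute)
qed

text \<open>When the first letter of the pattern exceeds its last one, an occurrence whose last entry
  lies in the higher block ys must also start there, so no occurrence straddles the two blocks.\<close>
lemma contains_append_separated:
  assumes occ: "contains (xs @ ys) tau"
    and sep: "\<forall>x\<in>set xs. \<forall>y\<in>set ys. x < y"
    and first_gt_last: "tau ! 0 > tau ! (length tau - 1)"
  shows "contains xs tau \<or> contains ys tau"
proof -
  obtain idx where idx: "occurrence (xs @ ys) tau idx"
    using occ contains_iff_occurrence by blast
  define l where "l = length tau - 1"
  have "tau \<noteq> []" using first_gt_last by auto
  then have l: "l < length idx" "0 < length idx" "\<forall>i<length idx. i \<le> l"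
    using idx unfolding l_def occurrence_def by auto
  have mono: "idx ! a \<le> idx ! b" if "a \<le> b" "b < length idx" for a b
    using idx that sorted_nth_mono[OF strict_sorted_imp_sorted] unfolding occurrence_def by blast
  show ?thesis
  proof (cases "idx ! l < length xs")
    case True
    then have "\<forall>i<length idx. idx ! i < length xs"
      using mono l by (meson le_less_trans)
    then show ?thesis
      using occurrence_append_left[OF idx] contains_iff_occurrence by blast
  next
    case False
    have last_lt_first: "(xs @ ys) ! (idx ! l) < (xs @ ys) ! (idx ! 0)"
      using idx l first_gt_last unfolding l_def occurrence_def by auto
    have "idx ! l - length xs < length ys"
      using False idx l unfolding occurrence_def by auto
    then have "idx ! 0 \<ge> length xs"
      using last_lt_first False separated_nth_less[OF sep, of "idx ! 0" "idx ! l - length xs"]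
      by (cases "idx ! 0 < length xs") (auto simp: nth_append)
    then have "\<forall>i<length idx. length xs \<le> idx ! i"
      using mono by (meson le_trans zero_le)
    then show ?thesis
      using occurrence_append_right[OF idx] contains_iff_occurrence by blast
  qed
qed

section \<open>Statistics of a concatenation of separated blocks\<close>

lemma card_less_add_split:
  "card {i. i < (m::nat) + n \<and> P i} = card {i. i < m \<and> P i} + card {i. i < n \<and> P (m + i)}"
proof -
  have split: "{i. i < m + n \<and> P i} = {i. i < m \<and> P i} \<union> (+) m ` {i. i < n \<and> P (m + i)}"
  proof (intro set_eqI iffI)
    fix i assume "i \<in> {i. i < m + n \<and> P i}"
    then show "i \<in> {i. i < m \<and> P i} \<union> (+) m ` {i. i < n \<and> P (m + i)}"
      by (cases "i < m") (auto simp: image_iff intro!: exI[of _ "i - m"])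
  qed auto
  show ?thesis
    unfolding split by (subst card_Un_disjoint) (auto simp: card_image)
qed

lemma all_less_add_iff: "(\<forall>j<(m::nat) + n. P j) \<longleftrightarrow> (\<forall>j<m. P j) \<and> (\<forall>j<n. P (m + j))"
proof (intro iffI conjI allI impI)
  fix j assume "(\<forall>j<m. P j) \<and> (\<forall>j<n. P (m + j))" "j < m + n"
  then show "P j" by (cases "j < m") (auto dest: spec[of _ "j - m"])
qed auto

lemma all_between_add_iff:
  assumes "i < (m::nat)"
  shows "(\<forall>j. i < j \<and> j < m + n \<longrightarrow> P j)
    \<longleftrightarrow> (\<forall>j. i < j \<and> j < m \<longrightarrow> P j) \<and> (\<forall>j<n. P (m + j))"
proof (intro iffI conjI allI impI)
  fix j assume "(\<forall>j. i < j \<and> j < m \<longrightarrow> P j) \<and> (\<forall>j<n. P (m + j))" "i < j \<and> j < m + n"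
  then show "P j" by (cases "j < m") (auto dest: spec[of _ "j - m"])
qed (use assms in auto)

lemma all_between_add_shift:
  "(\<forall>j. (m::nat) + i < j \<and> j < m + n \<longrightarrow> P j) \<longleftrightarrow> (\<forall>j. i < j \<and> j < n \<longrightarrow> P (m + j))"
proof (intro iffI allI impI)
  fix j assume "\<forall>j. i < j \<and> j < n \<longrightarrow> P (m + j)" "m + i < j \<and> j < m + n"
  then show "P j" by (auto dest: spec[of _ "j - m"])
qed auto

lemma lrmax_append:
  assumes sep: "\<forall>x\<in>set xs. \<forall>y\<in>set ys. x < y"
  shows "lrmax (xs @ ys) = lrmax xs + lrmax ys"
  unfolding lrmax_def length_append card_less_add_split
  using sep
  by (auto simp: nth_append all_less_add_iff
      intro!: arg_cong2[where f="(+)"] arg_cong[where f=card])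

lemma lrmin_append:
  assumes sep: "\<forall>x\<in>set xs. \<forall>y\<in>set ys. x < y" and "xs \<noteq> []"
  shows "lrmin (xs @ ys) = lrmin xs"
proof -
  have "\<not> (\<forall>j<length xs + i. (xs @ ys) ! j > (xs @ ys) ! (length xs + i))" if "i < length ys" for i
    using separated_nth_less[OF sep, of 0 i] that \<open>xs \<noteq> []\<close>
    by (auto simp: nth_append intro!: exI[of _ 0])
  then have none_in_ys:
    "{i. i < length ys \<and> (\<forall>j<length xs + i. (xs @ ys) ! j > (xs @ ys) ! (length xs + i))} = {}"
    by blast
  show ?thesis
    unfolding lrmin_def length_append card_less_add_split none_in_ys
    by (auto simp: nth_append intro!: arg_cong[where f=card])
qed

lemma rlmax_append:
  assumes sep: "\<forall>x\<in>set xs. \<forall>y\<in>set ys. x < y" and "ys \<noteq> []"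
  shows "rlmax (xs @ ys) = rlmax ys"
proof -
  have "\<not> (\<forall>j. i < j \<and> j < length xs + length ys \<longrightarrow> (xs @ ys) ! j < (xs @ ys) ! i)"
    if "i < length xs" for i
    using separated_nth_less[OF sep, of i 0] that \<open>ys \<noteq> []\<close>
    by (auto simp: nth_append intro!: exI[of _ "length xs"])
  then have none_in_xs: "{i. i < length xs \<and>
      (\<forall>j. i < j \<and> j < length xs + length ys \<longrightarrow> (xs @ ys) ! j < (xs @ ys) ! i)} = {}"
    by blast
  show ?thesis
    unfolding rlmax_def length_append card_less_add_split none_in_xs
    by (auto simp: nth_append all_between_add_shift intro!: arg_cong[where f=card])
qed

lemma rlmin_append:
  assumes sep: "\<forall>x\<in>set xs. \<forall>y\<in>set ys. x < y"
  shows "rlmin (xs @ ys) = rlmin xs + rlmin ys"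
  unfolding rlmin_def length_append card_less_add_split
  using sep
  by (auto simp: nth_append all_between_add_iff all_between_add_shift
      intro!: arg_cong2[where f="(+)"] arg_cong[where f=card])

lemma card_adjacent_pairs_append:
  assumes "xs \<noteq> []" "ys \<noteq> []"
  shows "card {i. Suc i < length (xs @ ys) \<and> R ((xs @ ys) ! i) ((xs @ ys) ! Suc i)}
    = card {i. Suc i < length xs \<and> R (xs ! i) (xs ! Suc i)}
      + (if R (last xs) (hd ys) then 1 else 0)
      + card {i. Suc i < length ys \<and> R (ys ! i) (ys ! Suc i)}"
proof -
  obtain k l where k: "length xs = Suc k" and l: "length ys = Suc l"
    using assms by (metis length_0_conv not0_implies_Suc)
  define Q where "Q i \<longleftrightarrow> R ((xs @ ys) ! i) ((xs @ ys) ! Suc i)" for i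
  have "{i. Suc i < length (xs @ ys) \<and> Q i} = {i. i < k + (1 + l) \<and> Q i}"
    using k l by auto
  then have "card {i. Suc i < length (xs @ ys) \<and> Q i}
      = card {i. i < k \<and> Q i} + (card {i. i < 1 \<and> Q (k + i)} + card {i. i < l \<and> Q (k + (1 + i))})"
    by (simp only: card_less_add_split)
  moreover have "{i. i < k \<and> Q i} = {i. Suc i < length xs \<and> R (xs ! i) (xs ! Suc i)}"
    using k by (auto simp: Q_def nth_append)
  moreover have "{i. i < 1 \<and> Q (k + i)} = (if R (last xs) (hd ys) then {0} else {})"
    using k assms by (auto simp: Q_def nth_append last_conv_nth hd_conv_nth)
  moreover have "{i. i < l \<and> Q (k + (1 + i))} = {i. Suc i < length ys \<and> R (ys ! i) (ys ! Suc i)}"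
    using k l by (auto simp: Q_def nth_append)
  ultimately show ?thesis by (simp add: Q_def)
qed

lemma asc_append:
  assumes "\<forall>x\<in>set xs. \<forall>y\<in>set ys. x < y" "xs \<noteq> []" "ys \<noteq> []"
  shows "asc (xs @ ys) = asc xs + asc ys + 1"
  using card_adjacent_pairs_append[OF assms(2,3), of "(<)"] assms
  unfolding asc_def by simp

lemma des_append:
  assumes "\<forall>x\<in>set xs. \<forall>y\<in>set ys. x < y" "xs \<noteq> []" "ys \<noteq> []"
  shows "des (xs @ ys) = des xs + des ys"
  using card_adjacent_pairs_append[OF assms(2,3), of "(>)"] assms
  unfolding des_def by (simp add: not_less_iff_gr_or_eq)

section \<open>Decreasing layers\<close>

definition layer :: "nat \<Rightarrow> nat \<Rightarrow> nat list" where
  "layer m a = rev [Suc m..<Suc (m + a)]"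

lemma length_layer [simp]: "length (layer m a) = a"
  by (simp add: layer_def)

lemma nth_layer [simp]: "k < a \<Longrightarrow> layer m a ! k = m + a - k"
  by (simp add: layer_def rev_nth del: upt_Suc)

lemma set_layer: "set (layer m a) = {Suc m..m + a}"
  by (auto simp: layer_def simp del: upt_Suc)

lemma distinct_layer: "distinct (layer m a)"
  by (simp add: layer_def del: upt_Suc)

lemma layer_eq_Nil_iff [simp]: "layer m a = [] \<longleftrightarrow> a = 0"
  by (simp add: layer_def del: upt_Suc)

lemma sorted_wrt_layer: "sorted_wrt (>) (layer m a)"
  by (simp add: layer_def sorted_wrt_rev del: upt_Suc)

lemma layer_unique:
  assumes "sorted_wrt (>) ys" "set ys = {Suc m..m + a}"
  shows "ys = layer m a"
proof -
  have "rev ys = [Suc m..<Suc (m + a)]"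
    by (rule strict_sorted_equal)
      (use assms in \<open>simp_all add: sorted_wrt_rev atLeastLessThanSuc_atLeastAtMost del: upt_Suc\<close>)
  then show ?thesis unfolding layer_def by (metis rev_rev_ident)
qed

lemma asc_layer: "asc (layer m a) = 0"
proof -
  have index_set: "{i. Suc i < a \<and> layer m a ! i < layer m a ! Suc i} = {}" by auto
  show ?thesis unfolding asc_def length_layer index_set by simp
qed

lemma des_layer: "des (layer m a) = a - 1"
proof -
  have index_set: "{i. Suc i < a \<and> layer m a ! i > layer m a ! Suc i} = {..<a - 1}" by force
  show ?thesis unfolding des_def length_layer index_set by simp
qed

lemma lrmax_layer:
  assumes "a \<noteq> 0"
  shows "lrmax (layer m a) = 1"
proof -
  have "i = 0" if "i < a" "\<forall>j<i. layer m a ! j < layer m a ! i" for i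
    using that(2)[rule_format, of 0] that(1) by (cases i) auto
  then have index_set: "{i. i < a \<and> (\<forall>j<i. layer m a ! j < layer m a ! i)} = {0}"
    using \<open>a \<noteq> 0\<close> by auto
  show ?thesis unfolding lrmax_def length_layer index_set by simp
qed

lemma lrmin_layer: "lrmin (layer m a) = a"
proof -
  have index_set: "{i. i < a \<and> (\<forall>j<i. layer m a ! j > layer m a ! i)} = {..<a}" by auto
  show ?thesis unfolding lrmin_def length_layer index_set by simp
qed

lemma rlmax_layer: "rlmax (layer m a) = a"
proof -
  have index_set: "{i. i < a \<and> (\<forall>j. i < j \<and> j < a \<longrightarrow> layer m a ! j < layer m a ! i)} = {..<a}"
    by (auto simp: diff_less_mono2)
  show ?thesis unfolding rlmax_def length_layer index_set by simp
qed

lemma rlmin_layer: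
  assumes "a \<noteq> 0"
  shows "rlmin (layer m a) = 1"
proof -
  have "i = a - 1" if "i < a" "\<forall>j. i < j \<and> j < a \<longrightarrow> layer m a ! j > layer m a ! i" for i
    using that(2)[rule_format, of "a - 1"] that(1) by (cases "i < a - 1") auto
  then have index_set:
    "{i. i < a \<and> (\<forall>j. i < j \<and> j < a \<longrightarrow> layer m a ! j > layer m a ! i)} = {a - 1}"
    using \<open>a \<noteq> 0\<close> by auto
  show ?thesis unfolding rlmin_def length_layer index_set by simp
qed

section \<open>The layered structure of permutations avoiding 231 and 312\<close>

definition S_231_312 :: "nat \<Rightarrow> nat list set" where
  "S_231_312 n = avoiders [2,3,1] [3,1,2] n"

lemma mem_S_231_312_iff:
  "w \<in> S_231_312 n \<longleftrightarrow> length w = n \<and> distinct w \<and> set w = {1..n}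
     \<and> \<not> contains w [2,3,1] \<and> \<not> contains w [3,1,2]"
  by (auto simp: S_231_312_def avoiders_def perms_def avoids_def)

lemma S_231_312_0: "S_231_312 0 = {[]}"
  by (auto simp: mem_S_231_312_iff not_contains_Nil)

lemma finite_S_231_312: "finite (S_231_312 n)"
proof (rule finite_subset)
  show "S_231_312 n \<subseteq> {xs. set xs \<subseteq> {1..n} \<and> length xs = n}"
    by (auto simp: mem_S_231_312_iff)
  show "finite {xs. set xs \<subseteq> {1..n} \<and> length xs = n}"
    by (rule finite_lists_length_eq) simp
qed

lemma append_layer_in_S_231_312:
  assumes "sigma \<in> S_231_312 m" "a \<noteq> 0"
  shows "sigma @ layer m a \<in> S_231_312 (m + a)"
proof -
  have perm: "length sigma = m" "distinct sigma" "set sigma = {1..m}"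
    and avoid: "\<not> contains sigma [2,3,1]" "\<not> contains sigma [3,1,2]"
    using assms(1) by (simp_all add: mem_S_231_312_iff)
  have sep: "\<forall>x\<in>set sigma. \<forall>y\<in>set (layer m a). x < y"
    using perm by (auto simp: set_layer)
  have "\<not> contains (layer m a) tau" if "\<not> sorted_wrt (>) tau" for tau
    using pattern_decreasing_if_contains[OF _ sorted_wrt_layer] that by blast
  then have layer_avoids: "\<not> contains (layer m a) [2,3,1]" "\<not> contains (layer m a) [3,1,2]"
    by simp_all
  have "\<not> contains (sigma @ layer m a) tau"
    if "\<not> contains sigma tau" "\<not> contains (layer m a) tau"
      and "tau ! 0 > tau ! (length tau - 1)" for tau
    using contains_append_separated[OF _ sep] that by blast
  then have "\<not> contains (sigma @ layer m a) [2,3,1]" "\<not> contains (sigma @ layer m a) [3,1,2]"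
    using avoid layer_avoids by simp_all
  moreover have "{1..m} \<union> {Suc m..m + a} = {1..m + a}"
    by auto
  ultimately show ?thesis
    using perm sep by (auto simp: mem_S_231_312_iff set_layer distinct_layer)
qed

lemma S_231_312_around_max:
  assumes w: "w \<in> S_231_312 n" and i: "i < n" "w ! i = n"
  shows S_231_312_after_max_decreasing: "\<And>j k. i \<le> j \<Longrightarrow> j < k \<Longrightarrow> k < n \<Longrightarrow> w ! k < w ! j"
    and S_231_312_before_max_below: "\<And>j k. j < i \<Longrightarrow> i \<le> k \<Longrightarrow> k < n \<Longrightarrow> w ! j < w ! k"
proof -
  have len: "length w = n" and dist: "distinct w" and set_w: "set w = {1..n}"
    and avoid: "\<not> contains w [2,3,1]" "\<not> contains w [3,1,2]"
    using w by (simp_all add: mem_S_231_312_iff)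
  have below_n: "w ! k < n" if "k < n" "k \<noteq> i" for k
  proof -
    have "w ! k \<in> set w" "w ! k \<noteq> w ! i"
      using that i(1) len nth_eq_iff_index_eq[OF dist, of k i] by simp_all
    then show ?thesis using set_w i by auto
  qed
  have neq: "w ! j \<noteq> w ! k" if "j \<noteq> k" "j < n" "k < n" for j k
    using that len dist by (simp add: nth_eq_iff_index_eq)
  show "w ! k < w ! j" if "i \<le> j" "j < k" "k < n" for j k
  proof (cases "j = i")
    case False
    then have "\<not> w ! j < w ! k"
      using contains_312I[of i j k w] below_n[of k] that i len avoid by auto
    then show ?thesis using neq[of j k] that by simp
  qed (use below_n i that in auto)
  show "w ! j < w ! k" if "j < i" "i \<le> k" "k < n" for j k
  proof (cases "k = i")
    case False
    then have "\<not> w ! k < w ! j"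
      using contains_231I[of j i k w] below_n[of j] that i len avoid by auto
    then show ?thesis using neq[of j k] that i by simp
  qed (use below_n i that in auto)
qed

lemma lower_part_eq_atLeastAtMost:
  assumes "A \<union> B = {1..(n::nat)}" "\<forall>x\<in>A. \<forall>y\<in>B. x < y"
  shows "A = {1..card A}"
proof -
  have fin: "finite A" using assms(1) by (metis finite_Un finite_atLeastAtMost)
  have down: "y \<in> A" if "x \<in> A" "y \<in> {1..x}" for x y
  proof -
    have "x \<le> n" using that(1) assms(1) by (metis UnI1 atLeastAtMost_iff)
    then have "y \<in> A \<union> B" using that(2) assms(1) by auto
    then show ?thesis using that assms(2) by force
  qed
  have "A \<subseteq> {1..card A}"
  proof
    fix x assume "x \<in> A"
    then have "card {1..x} \<le> card A" using down fin by (intro card_mono) auto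
    then show "x \<in> {1..card A}" using \<open>x \<in> A\<close> assms(1) by auto
  qed
  then show ?thesis by (intro card_subset_eq) auto
qed

lemma take_drop_split_at_layer:
  assumes w: "length w = n" "distinct w" "set w = {1..n}" and "i \<le> n"
    and below: "\<And>j k. j < i \<Longrightarrow> i \<le> k \<Longrightarrow> k < n \<Longrightarrow> w ! j < w ! k"
    and decreasing: "\<And>j k. i \<le> j \<Longrightarrow> j < k \<Longrightarrow> k < n \<Longrightarrow> w ! k < w ! j"
  shows "set (take i w) = {1..i}" "drop i w = layer i (n - i)"
proof -
  have sep: "\<forall>x\<in>set (take i w). \<forall>y\<in>set (drop i w). x < y"
  proof (intro ballI)
    fix x y assume "x \<in> set (take i w)" "y \<in> set (drop i w)"
    then obtain j k where "j < i" "x = w ! j" "k < n - i" "y = w ! (i + k)"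
      using w \<open>i \<le> n\<close> by (auto simp: in_set_conv_nth)
    then show "x < y" using below by simp
  qed
  have union: "set (take i w) \<union> set (drop i w) = {1..n}"
    using w by (metis append_take_drop_id set_append)
  have "card (set (take i w)) = i"
    using w \<open>i \<le> n\<close> by (simp add: distinct_card)
  then show set_take: "set (take i w) = {1..i}"
    using lower_part_eq_atLeastAtMost[OF union sep] by simp
  have "set (take i w) \<inter> set (drop i w) = {}"
    using sep by (meson disjoint_iff less_irrefl)
  then have "set (drop i w) = {1..n} - {1..i}"
    using union unfolding set_take by blast
  also have "\<dots> = {Suc i..i + (n - i)}"
    using \<open>i \<le> n\<close> by auto
  finally have "set (drop i w) = {Suc i..i + (n - i)}" .
  moreover have "sorted_wrt (>) (drop i w)"
    using decreasing w unfolding sorted_wrt_iff_nth_less by auto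
  ultimately show "drop i w = layer i (n - i)"
    by (intro layer_unique)
qed

lemma S_231_312_last_layer:
  assumes w: "w \<in> S_231_312 n" and "n \<noteq> 0"
  obtains a sigma where "a \<in> {1..n}" "sigma \<in> S_231_312 (n - a)" "w = sigma @ layer (n - a) a"
proof -
  have perm: "length w = n" "distinct w" "set w = {1..n}"
    and avoid: "\<not> contains w [2,3,1]" "\<not> contains w [3,1,2]"
    using w by (simp_all add: mem_S_231_312_iff)
  have "n \<in> set w" using \<open>n \<noteq> 0\<close> perm by simp
  then obtain i where i: "i < n" "w ! i = n"
    using perm(1) by (auto simp: in_set_conv_nth)
  have split: "set (take i w) = {1..i}" "drop i w = layer i (n - i)"
    using take_drop_split_at_layer[OF perm less_imp_le[OF i(1)]]
      S_231_312_before_max_below[OF w i] S_231_312_after_max_decreasing[OF w i] by blast+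
  have "\<not> contains (take i w) tau" if "\<not> contains w tau" for tau
    using contains_take that by blast
  then have "take i w \<in> S_231_312 i"
    using split(1) perm avoid i by (simp add: mem_S_231_312_iff)
  moreover have "w = take i w @ layer i (n - i)"
    using split(2) by (metis append_take_drop_id)
  ultimately show ?thesis
    using that[of "n - i" "take i w"] i by auto
qed

lemma append_layer_inj:
  assumes "sigma \<in> S_231_312 m" "sigma' \<in> S_231_312 m'" "m + a = m' + a'" "a \<noteq> 0" "a' \<noteq> 0"
    and eq: "sigma @ layer m a = sigma' @ layer m' a'"
  shows "m = m'" "sigma = sigma'"
proof -
  have len: "length sigma = m" "length sigma' = m'"
    using assms(1,2) by (simp_all add: mem_S_231_312_iff)
  have "distinct (sigma @ layer m a)"
    using append_layer_in_S_231_312[OF assms(1,4)] by (simp add: mem_S_231_312_iff)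
  moreover have "(sigma @ layer m a) ! m = m + a"
    using len \<open>a \<noteq> 0\<close> by (simp add: nth_append)
  moreover have "(sigma @ layer m a) ! m' = m + a"
    using eq len \<open>a' \<noteq> 0\<close> assms(3) by (simp add: nth_append)
  moreover have "m < m + a" "m' < m + a"
    using assms(3-5) by simp_all
  ultimately show "m = m'"
    using nth_eq_iff_index_eq[of "sigma @ layer m a" m m'] len by simp
  then show "sigma = sigma'"
    using append_eq_append_conv[of sigma sigma' "layer m a" "layer m' a'"] eq len by simp
qed

lemma sum_S_231_312_by_last_layer:
  assumes "n \<noteq> 0"
  shows "(\<Sum>w\<in>S_231_312 n. f w) = (\<Sum>a=1..n. \<Sum>sigma\<in>S_231_312 (n - a). f (sigma @ layer (n - a) a))"
proof -
  let ?g = "\<lambda>(a, sigma). sigma @ layer (n - a) a" and ?I = "SIGMA a:{1..n}. S_231_312 (n - a)"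
  have "inj_on ?g ?I"
  proof (rule inj_onI)
    fix x y assume "x \<in> ?I" "y \<in> ?I" "?g x = ?g y"
    then show "x = y"
      using append_layer_inj[of "snd x" "n - fst x" "snd y" "n - fst y" "fst x" "fst y"]
      by (auto simp: case_prod_beta prod_eq_iff)
  qed
  moreover have "?g ` ?I = S_231_312 n"
  proof (intro equalityI subsetI)
    fix w assume "w \<in> ?g ` ?I"
    then obtain a sigma where "a \<in> {1..n}" "sigma \<in> S_231_312 (n - a)" "w = sigma @ layer (n - a) a"
      by auto
    then show "w \<in> S_231_312 n"
      using append_layer_in_S_231_312[of sigma "n - a" a] by auto
  next
    fix w assume "w \<in> S_231_312 n"
    then obtain a sigma where "a \<in> {1..n}" "sigma \<in> S_231_312 (n - a)" "w = sigma @ layer (n - a) a"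
      using S_231_312_last_layer assms by blast
    then show "w \<in> ?g ` ?I" by force
  qed
  ultimately have "bij_betw ?g ?I (S_231_312 n)"
    unfolding bij_betw_def ..
  then have "(\<Sum>w\<in>S_231_312 n. f w) = (\<Sum>(a, sigma)\<in>?I. f (sigma @ layer (n - a) a))"
    by (subst sum.reindex_bij_betw[symmetric]) (auto simp: case_prod_unfold)
  also have "\<dots> = (\<Sum>a=1..n. \<Sum>sigma\<in>S_231_312 (n - a). f (sigma @ layer (n - a) a))"
    by (rule sum.Sigma[symmetric]) (auto simp: finite_S_231_312)
  finally show ?thesis .
qed

section \<open>The generating function\<close>

definition weight ::
    "'a::comm_monoid_mult \<Rightarrow> 'a \<Rightarrow> 'a \<Rightarrow> 'a \<Rightarrow> 'a \<Rightarrow> 'a \<Rightarrow> nat list \<Rightarrow> 'a" where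
  "weight p q u v s t w =
     p ^ asc w * q ^ des w * u ^ lrmax w * v ^ rlmax w * s ^ lrmin w * t ^ rlmin w"

lemma weight_Nil: "weight p q u v s t [] = 1"
  by (simp add: weight_def asc_def des_def lrmax_def rlmax_def lrmin_def rlmin_def)

lemma weight_layer:
  "a \<noteq> 0 \<Longrightarrow> weight p q u v s t (layer m a) = q ^ (a - 1) * u * v ^ a * s ^ a * t"
  by (simp add: weight_def asc_layer des_layer lrmax_layer rlmax_layer lrmin_layer rlmin_layer)

lemma weight_append_layer:
  assumes "\<forall>x\<in>set sigma. x \<le> m" "sigma \<noteq> []" "a \<noteq> 0"
  shows "weight p q u v s t (sigma @ layer m a)
    = weight p q u 1 s t sigma * (p * q ^ (a - 1) * u * t * v ^ a)"
proof -
  have sep: "\<forall>x\<in>set sigma. \<forall>y\<in>set (layer m a). x < y"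
    using assms(1) by (auto simp: set_layer)
  have ne: "layer m a \<noteq> []" using assms(3) by simp
  show ?thesis
    unfolding weight_def asc_append[OF sep assms(2) ne] des_append[OF sep assms(2) ne]
      lrmax_append[OF sep] rlmax_append[OF sep ne] lrmin_append[OF sep assms(2)]
      rlmin_append[OF sep]
      asc_layer des_layer lrmax_layer[OF assms(3)] rlmax_layer lrmin_layer rlmin_layer[OF assms(3)]
    by (simp add: power_add ac_simps)
qed

lemma sum_weight_S_231_312:
  fixes p q u v s t :: "'a::comm_semiring_1"
  assumes "n \<noteq> 0"
  shows "(\<Sum>w\<in>S_231_312 n. weight p q u v s t w) = q ^ (n - 1) * u * v ^ n * s ^ n * t
    + (\<Sum>a=1..<n. (\<Sum>sigma\<in>S_231_312 (n - a). weight p q u 1 s t sigma)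
                     * (p * q ^ (a - 1) * u * t * v ^ a))"
proof -
  define c where
    "c a = (\<Sum>sigma\<in>S_231_312 (n - a). weight p q u v s t (sigma @ layer (n - a) a))" for a
  have c_layer: "c a = (\<Sum>sigma\<in>S_231_312 (n - a). weight p q u 1 s t sigma)
                        * (p * q ^ (a - 1) * u * t * v ^ a)" if "a \<in> {1..<n}" for a
  proof -
    have "weight p q u v s t (sigma @ layer (n - a) a)
        = weight p q u 1 s t sigma * (p * q ^ (a - 1) * u * t * v ^ a)"
      if "sigma \<in> S_231_312 (n - a)" for sigma
      using that \<open>a \<in> {1..<n}\<close> by (intro weight_append_layer) (auto simp: mem_S_231_312_iff)
    then show ?thesis unfolding c_def by (simp add: sum_distrib_right)
  qed
  have "{1..n} = insert n {1..<n}" using assms by auto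
  then have "(\<Sum>w\<in>S_231_312 n. weight p q u v s t w) = c n + (\<Sum>a=1..<n. c a)"
    unfolding c_def sum_S_231_312_by_last_layer[OF assms] by simp
  also have "c n = q ^ (n - 1) * u * v ^ n * s ^ n * t"
    using assms by (simp add: c_def S_231_312_0 weight_layer)
  also have "(\<Sum>a=1..<n. c a) = (\<Sum>a=1..<n. (\<Sum>sigma\<in>S_231_312 (n - a). weight p q u 1 s t sigma)
                                            * (p * q ^ (a - 1) * u * t * v ^ a))"
    using c_layer by (rule sum.cong[OF refl])
  finally show ?thesis .
qed

definition layer_series :: "'a::comm_ring_1 \<Rightarrow> 'a \<Rightarrow> 'a fps" where
  "layer_series q w = Abs_fps (\<lambda>a. if a = 0 then 0 else q ^ (a - 1) * w ^ a)"

lemma layer_series_eq: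
  "(1 - fps_const q * fps_const w * fps_X) * layer_series q w = fps_const w * fps_X"
  (is "?P * ?L = ?R")
proof (rule fps_ext)
  fix n
  have "?P * ?L = ?L - fps_const (q * w) * (fps_X * ?L)"
    by (simp add: algebra_simps)
  then show "fps_nth (?P * ?L) n = fps_nth ?R n"
    by (cases n; cases "n - 1") (simp_all add: layer_series_def fps_X_mult_nth)
qed

definition F_231_312 :: "'a::comm_ring_1 \<Rightarrow> 'a \<Rightarrow> 'a \<Rightarrow> 'a \<Rightarrow> 'a \<Rightarrow> 'a \<Rightarrow> 'a fps" where
  "F_231_312 p q u v s t = Abs_fps (\<lambda>n. \<Sum>w\<in>S_231_312 n. weight p q u v s t w)"

lemma genfun_231_312_eq_F: "genfun [2,3,1] [3,1,2] p q u v s t = F_231_312 p q u v s t"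
  by (simp add: genfun_def F_231_312_def S_231_312_def weight_def)

lemma F_231_312_eq:
  "F_231_312 p q u v s t = 1 + fps_const u * fps_const t * layer_series q (s * v)
     + fps_const p * fps_const u * fps_const t * layer_series q v * (F_231_312 p q u 1 s t - 1)"
  (is "?F = ?R")
proof (rule fps_ext)
  fix n
  let ?L = "layer_series q v" and ?H = "F_231_312 p q u 1 s t - 1"
  have R: "?R = 1 + fps_const (u * t) * layer_series q (s * v)
                  + fps_const (p * u * t) * (?L * ?H)"
    by (simp add: mult.assoc)
  show "fps_nth ?F n = fps_nth ?R n"
  proof (cases "n = 0")
    case True
    then show ?thesis by (simp add: R F_231_312_def S_231_312_0 weight_Nil layer_series_def)
  next
    case False
    have "fps_nth (?L * ?H) n = (\<Sum>a=0..n. fps_nth ?L a * fps_nth ?H (n - a))"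
      by (rule fps_mult_nth)
    also have "\<dots> = (\<Sum>a=1..<n. fps_nth ?L a * fps_nth ?H (n - a))"
      by (rule sum.mono_neutral_right)
         (auto simp: layer_series_def F_231_312_def S_231_312_0 weight_Nil)
    also have "\<dots> = (\<Sum>a=1..<n. q ^ (a - 1) * v ^ a
                            * (\<Sum>sigma\<in>S_231_312 (n - a). weight p q u 1 s t sigma))"
      by (intro sum.cong refl) (auto simp: layer_series_def F_231_312_def)
    finally show ?thesis
      using False
      by (simp add: R F_231_312_def sum_weight_S_231_312 layer_series_def sum_distrib_left
          power_mult_distrib ac_simps)
  qed
qed

lemma layer_equations_solution:
  fixes P Q U V S T X F G Esv Es Ev E1 :: "'a::comm_ring_1"
  assumes F: "F = 1 + U*T*Esv + P*U*T*Ev*(G - 1)"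
    and G: "G = 1 + U*T*Es + P*U*T*E1*(G - 1)"
    and Esv: "(1 - Q*S*V*X) * Esv = S*V*X" and Es: "(1 - Q*S*X) * Es = S*X"
    and Ev: "(1 - Q*V*X) * Ev = V*X" and E1: "(1 - Q*X) * E1 = X"
  shows "F * ((1 - Q*S*X) * (1 - Q*X - P*T*U*X) * (1 - Q*V*X) * (1 - Q*S*V*X)) =
    1 - P*T*U*X + S*T*U*V*X + Q^4*S^2*V^2*X^4
      + Q^3*S*V*X^3 * (-1 - V + S*(-1 + V*(-1 + (-1 + P)*T*U*X)))
      - Q*X*(1 + V - P*T*U*V*X + S^2*T*U*V*X*(1 + P*T*U*(-1 + V)*X)
            + S*(1 + V - P*T*U*X - (-1 + P)*T*U*V*X + P*T^2*U^2*V*X^2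
                 + T*U*V^2*X*(1 - P*T*U*X)))
      + Q^2*X^2*(V + S^2*V*(1 + T*U*(1 - P + V)*X)
            + S*(1 + V^2*(1 - (-1 + P)*T*U*X) + V*(2 - P*T*U*X)))"
proof -
  let ?D = "(1 - Q*S*X) * (1 - Q*X - P*T*U*X) * (1 - Q*V*X) * (1 - Q*S*V*X)"
  have G': "G - 1 = U*T*Es + P*U*T*E1*(G - 1)"
    using arg_cong[OF G, of "\<lambda>z. z - 1"] by (simp add: add.assoc)
  have "(1 - Q*X - P*T*U*X) * (G - 1) = (1 - Q*X) * (G - 1) - P*T*U*X * (G - 1)"
    by (simp add: algebra_simps)
  also have "(1 - Q*X) * (G - 1) = U*T*((1 - Q*X) * Es) + P*U*T*((1 - Q*X) * E1) * (G - 1)"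
    by (subst G') (simp add: algebra_simps)
  finally have H: "(1 - Q*X - P*T*U*X) * (G - 1) = U*T*((1 - Q*X) * Es)"
    unfolding E1 by (simp add: algebra_simps)
  have "F * ?D = ?D + U*T*(?D * Esv) + P*U*T*(?D * (Ev * (G - 1)))"
    unfolding F by (simp add: algebra_simps)
  also have "?D * Esv = (1 - Q*S*X) * (1 - Q*X - P*T*U*X) * (1 - Q*V*X) * ((1 - Q*S*V*X) * Esv)"
    by (simp only: mult.assoc)
  also have "?D * (Ev * (G - 1))
      = ((1 - Q*V*X) * Ev) * ((1 - Q*X - P*T*U*X) * (G - 1)) * (1 - Q*S*X) * (1 - Q*S*V*X)"
    by (simp only: mult_ac)
  also have "\<dots> = V*X*U*T*(1 - Q*X)*((1 - Q*S*X) * Es) * (1 - Q*S*V*X)"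
    unfolding Ev H by (simp only: mult_ac)
  finally show ?thesis
    unfolding Esv Es
    by (simp add: algebra_simps power2_eq_square power3_eq_cube power4_eq_xxxx)
qed

lemma fps_eq_divide_if_mult_eq:
  fixes F D A :: "'a::field fps"
  assumes "F * D = A" "fps_nth D 0 \<noteq> 0"
  shows "F = A / D"
proof -
  have "D \<noteq> 0" using assms(2) by auto
  then show ?thesis using assms(1) by auto
qed

theorem theorem7:
  fixes p q u v s t :: "'a::field"
  shows "(let X = (fps_X :: 'a fps); P = fps_const p; Q = fps_const q; U = fps_const u;
              V = fps_const v; S = fps_const s; T = fps_const t;
              A = 1 - P*T*U*X + S*T*U*V*X + Q^4*S^2*V^2*X^4
                  + Q^3*S*V*X^3 * (-1 - V + S*(-1 + V*(-1 + (-1 + P)*T*U*X)))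
                  - Q*X*(1 + V - P*T*U*V*X + S^2*T*U*V*X*(1 + P*T*U*(-1 + V)*X)
                        + S*(1 + V - P*T*U*X - (-1 + P)*T*U*V*X + P*T^2*U^2*V*X^2
                             + T*U*V^2*X*(1 - P*T*U*X)))
                  + Q^2*X^2*(V + S^2*V*(1 + T*U*(1 - P + V)*X)
                        + S*(1 + V^2*(1 - (-1 + P)*T*U*X) + V*(2 - P*T*U*X)));
              D = (1 - Q*S*X) * (1 - Q*X - P*T*U*X) * (1 - Q*V*X) * (1 - Q*S*V*X)
          in genfun [2,3,1] [3,1,2] p q u v s t = A / D)"
proof -
  note recursions =
    F_231_312_eq[of p q u v s t] F_231_312_eq[of p q u 1 s t, unfolded mult_1_right]
  note layer_series_equations =
    layer_series_eq[of q "s * v", unfolded fps_const_mult[symmetric] mult.assoc[symmetric]]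
    layer_series_eq[of q s] layer_series_eq[of q v]
    layer_series_eq[of q 1, unfolded fps_const_1_eq_1 mult_1_left mult_1_right]
  show ?thesis
    unfolding Let_def genfun_231_312_eq_F
    by (rule fps_eq_divide_if_mult_eq
        [OF layer_equations_solution[OF recursions layer_series_equations]]) simp
qed

end
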